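(* Suppose $w=w_1w_2\cdots w_n$ and $\tilde w=\tilde w_1\tilde w_2\cdots\tilde w_n$ are reduced words with $\tilde w_i-w_i\in\{0,1\}$ for all $i\in[n]$. Then $Q_{\mathsf{EG}}(w)=Q_{\mathsf{EG}}(\tilde w)$.
   Context: $S_\mathbb{Z}$ is the group of finitely supported permutations of $\mathbb{Z}$ with generators $s_i=(i,i+1)$; a reduced word (for some $\sigma\in S_\mathbb{Z}$) is a minimal-length word $i_1\cdots i_l$ with $\sigma=s_{i_1}\cdots s_{i_l}$. Tableaux are fillings of Young diagrams of partitions (French notation, rows numbered bottom to top). Edelman–Greene insertion of a reduced word $w=w_1\cdots w_n$: starting from the empty tableau, insert $w_1,\dots,w_n$ in turn, each starting in the first row; when $x$ is inserted into a row, let $y$ be the smallest entry in the row with $x\le y$; if none exists, $x$ is added to the end of the row; if $x=y$ the row is unchanged and $y+1$ is inserted into the next row; if $x<y$, $y$ is replaced by $x$ and $y$ is inserted into the next row. $Q_{\mathsf{EG}}(w)$ is the tableau of the resulting shape with entry $i$ in the box added when inserting $w_i$. *)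

theory Defs
  imports Main
begin

definition s_gen :: "int \<Rightarrow> int \<Rightarrow> int" where
  "s_gen i x = (if x = i then i + 1 else if x = i + 1 then i else x)"

definition perm_of_word :: "int list \<Rightarrow> int \<Rightarrow> int" where
  "perm_of_word w = foldr (\<lambda>i f. s_gen i \<circ> f) w id"

definition reduced_word :: "int list \<Rightarrow> bool" where
  "reduced_word w \<longleftrightarrow> (\<forall>v. perm_of_word v = perm_of_word w \<longrightarrow> length w \<le> length v)"

fun replace_first :: "int \<Rightarrow> int \<Rightarrow> int list \<Rightarrow> int list" where
  "replace_first y x [] = []"
| "replace_first y x (z # zs) = (if z = y then x # zs else z # replace_first y x zs)"

(* Edelman-Greene insertion of x into a tableau, given as the list of its rows
   (row 1 first, i.e. bottom row in French notation).  Returns the new tableau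
   and the (0-based) index of the row in which a box was added. *)
primrec eg_insert :: "int \<Rightarrow> int list list \<Rightarrow> int list list \<times> nat" where
  "eg_insert x [] = ([[x]], 0)"
| "eg_insert x (r # rs) =
     (if \<not> (\<exists>y\<in>set r. x \<le> y) then ((r @ [x]) # rs, 0)
      else (let y = Min {y \<in> set r. x \<le> y} in
            if x = y then (r # fst (eg_insert (y + 1) rs), Suc (snd (eg_insert (y + 1) rs)))
            else (replace_first y x r # fst (eg_insert y rs), Suc (snd (eg_insert y rs)))))"

definition add_box :: "nat \<Rightarrow> nat \<Rightarrow> nat list list \<Rightarrow> nat list list" where
  "add_box k i Q = (if k < length Q then Q[k := Q ! k @ [i]] else Q @ [[i]])"

definition eg_step :: "int list list \<times> nat list list \<Rightarrow> nat \<times> int \<Rightarrow> int list list \<times> nat list list" where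
  "eg_step PQ iw = (let (P, Q) = PQ; (i, x) = iw; (P', k) = eg_insert x P in (P', add_box k i Q))"

definition EG :: "int list \<Rightarrow> int list list \<times> nat list list" where
  "EG w = foldl eg_step ([], []) (zip [1..<length w + 1] w)"

definition Q_EG :: "int list \<Rightarrow> nat list list" where
  "Q_EG w = snd (EG w)"

end

theory Submission
  imports Defs
begin

(* Throughout the insertion, the reading word of the insertion tableau (rows read from
   the top down) is a reduced word for the product of the letters inserted so far.  Hence,
   when a letter x is inserted into a strictly increasing row r that already contains x,
   the word r x is reduced, which forces x + 1 to follow x in r.  With this, a case analysis
   on the first entry of the rows shows that inserting letters x, xt with xt - x in {0,1}
   into rows that differ entrywise by 0 or 1 yields rows that again differ entrywise by 0 or
   1, and both bump a letter (again differing by 0 or 1) or neither does.  So the boxes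
   created by w and wt lie in the same rows at every step, and the recording tableaux
   coincide. *)

lemma perm_of_word_Nil [simp]: "perm_of_word [] = id"
  by (simp add: perm_of_word_def)

lemma perm_of_word_Cons [simp]: "perm_of_word (i # u) = s_gen i \<circ> perm_of_word u"
  by (simp add: perm_of_word_def)

lemma perm_of_word_append [simp]: "perm_of_word (u @ v) = perm_of_word u \<circ> perm_of_word v"
  by (induction u) (simp_all add: comp_assoc)

lemma s_gen_commute: "2 \<le> \<bar>i - j\<bar> \<Longrightarrow> s_gen i \<circ> s_gen j = s_gen j \<circ> s_gen i"
  by (rule ext) (simp add: s_gen_def, arith)

lemma s_gen_comp_self: "s_gen i \<circ> s_gen i = id"
  by (rule ext) (simp add: s_gen_def)

lemma s_gen_braid: "s_gen i \<circ> s_gen (i + 1) \<circ> s_gen i = s_gen (i + 1) \<circ> s_gen i \<circ> s_gen (i + 1)"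
  by (rule ext) (simp add: s_gen_def)

lemma perm_of_word_comp_s_gen_commute:
  assumes "\<forall>j\<in>set u. 2 \<le> \<bar>j - y\<bar>"
  shows "perm_of_word u \<circ> s_gen y = s_gen y \<circ> perm_of_word u"
  using assms
proof (induction u)
  case (Cons j u)
  have IH: "perm_of_word u \<circ> s_gen y = s_gen y \<circ> perm_of_word u"
    using Cons.prems by (intro Cons.IH) simp
  have "perm_of_word (j # u) \<circ> s_gen y = s_gen j \<circ> (perm_of_word u \<circ> s_gen y)"
    by (simp add: comp_assoc)
  also have "\<dots> = (s_gen j \<circ> s_gen y) \<circ> perm_of_word u"
    by (simp only: IH comp_assoc)
  also have "\<dots> = (s_gen y \<circ> s_gen j) \<circ> perm_of_word u"
    using Cons.prems s_gen_commute[of j y] by simp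
  finally show ?case by (simp only: perm_of_word_Cons comp_assoc)
qed simp

lemma reduced_word_perm_eq:
  assumes "reduced_word w" "perm_of_word v = perm_of_word w" "length v = length w"
  shows "reduced_word v"
  using assms unfolding reduced_word_def by auto

lemma reduced_word_appendD1:
  assumes "reduced_word (u @ v)"
  shows "reduced_word u"
  unfolding reduced_word_def
proof (intro allI impI)
  fix u' assume "perm_of_word u' = perm_of_word u"
  then have "perm_of_word (u' @ v) = perm_of_word (u @ v)" by simp
  with assms have "length (u @ v) \<le> length (u' @ v)" unfolding reduced_word_def by blast
  then show "length u \<le> length u'" by simp
qed

lemma reduced_word_appendD2:
  assumes "reduced_word (u @ v)"
  shows "reduced_word v"
  unfolding reduced_word_def
proof (intro allI impI)
  fix v' assume "perm_of_word v' = perm_of_word v"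
  then have "perm_of_word (u @ v') = perm_of_word (u @ v)" by simp
  with assms have "length (u @ v) \<le> length (u @ v')" unfolding reduced_word_def by blast
  then show "length v \<le> length v'" by simp
qed

lemma not_reduced_word_repeat: "\<not> reduced_word (a # a # u)"
proof
  assume "reduced_word (a # a # u)"
  moreover have "perm_of_word u = perm_of_word (a # a # u)"
    by (simp add: comp_assoc[symmetric] s_gen_comp_self)
  ultimately have "length (a # a # u) \<le> length u" unfolding reduced_word_def by blast
  then show False by simp
qed

(* Otherwise y commutes past ys, producing the non-reduced factor y y. *)
lemma reduced_row_snoc_head:
  assumes sorted: "sorted_wrt (<) (y # ys)" and reduced: "reduced_word (y # ys @ [y])"
  shows "\<exists>ys'. ys = (y + 1) # ys'"
proof (rule ccontr)
  assume "\<nexists>ys'. ys = (y + 1) # ys'"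
  then have "\<forall>j\<in>set ys. 2 \<le> \<bar>j - y\<bar>"
    using sorted by (cases ys) fastforce+
  then have "perm_of_word (y # ys @ [y]) = perm_of_word (y # y # ys)"
    by (simp add: perm_of_word_comp_s_gen_commute comp_assoc)
  then have "reduced_word (y # y # ys)"
    using reduced_word_perm_eq[OF reduced, of "y # y # ys"] by simp
  then show False using not_reduced_word_repeat by blast
qed

fun row_insert :: "int \<Rightarrow> int list \<Rightarrow> int list \<times> int option" where
  "row_insert x [] = ([x], None)"
| "row_insert x (y # ys) =
     (if x < y then (x # ys, Some y)
      else if x = y then (y # ys, Some (y + 1))
      else apfst (Cons y) (row_insert x ys))"

lemma row_insert_conv_Min:
  assumes "sorted_wrt (<) r"
  shows "row_insert x r =
    (if \<not> (\<exists>y\<in>set r. x \<le> y) then (r @ [x], None)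
     else let y = Min {y \<in> set r. x \<le> y} in
       if x = y then (r, Some (y + 1)) else (replace_first y x r, Some y))"
  using assms
proof (induction r)
  case (Cons y ys)
  show ?case
  proof (cases "x \<le> y")
    case True
    have "Min {v \<in> set (y # ys). x \<le> v} = y"
      using Cons.prems True by (intro Min_eqI) auto
    with True show ?thesis by (auto simp: Let_def)
  next
    case False
    then have "{v \<in> set (y # ys). x \<le> v} = {v \<in> set ys. x \<le> v}" by auto
    moreover have "\<exists>v\<in>set ys. x \<le> v \<Longrightarrow> x \<le> Min {v \<in> set ys. x \<le> v}"
      by (subst Min_ge_iff) auto
    ultimately show ?thesis using False Cons by (auto simp: Let_def)
  qed
qed simp

lemma eg_insert_Cons:
  assumes "sorted_wrt (<) r"
  shows "eg_insert x (r # rs) =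
    (case snd (row_insert x r) of
      None \<Rightarrow> (fst (row_insert x r) # rs, 0)
    | Some z \<Rightarrow> (fst (row_insert x r) # fst (eg_insert z rs), Suc (snd (eg_insert z rs))))"
  using row_insert_conv_Min[OF assms, of x] by (simp add: Let_def)

declare eg_insert.simps(2) [simp del]

lemma set_row_insert: "set (fst (row_insert x r)) \<subseteq> insert x (set r)"
  by (induction r) auto

lemma sorted_row_insert: "sorted_wrt (<) r \<Longrightarrow> sorted_wrt (<) (fst (row_insert x r))"
  by (induction r) (use set_row_insert in \<open>fastforce+\<close>)

lemma row_insert_None: "snd (row_insert x r) = None \<Longrightarrow> fst (row_insert x r) = r @ [x]"
  by (induction r) (auto split: if_splits)

lemma row_insert_Some_less: "snd (row_insert x r) = Some z \<Longrightarrow> x < z"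
  by (induction r) (auto split: if_splits)

lemma length_row_insert_Some:
  "snd (row_insert x r) = Some z \<Longrightarrow> length (fst (row_insert x r)) = length r"
  by (induction r) (auto split: if_splits)

lemma perm_of_word_row_insert:
  assumes "sorted_wrt (<) r" "reduced_word (r @ [x])" "snd (row_insert x r) = Some z"
  shows "perm_of_word (r @ [x]) = perm_of_word (z # fst (row_insert x r))"
  using assms
proof (induction r)
  case (Cons y ys)
  consider "x < y" | "x = y" | "y < x" by linarith
  then show ?case
  proof cases
    case 1
    then have "\<forall>j\<in>set ys. 2 \<le> \<bar>j - x\<bar>" using Cons.prems(1) by force
    then show ?thesis
      using 1 Cons.prems(3) by (simp add: perm_of_word_comp_s_gen_commute comp_assoc)
  next
    case 2
    then obtain ys' where ys: "ys = (y + 1) # ys'"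
      using reduced_row_snoc_head Cons.prems(1,2) by fastforce
    then have "\<forall>j\<in>set ys'. 2 \<le> \<bar>j - y\<bar>" using Cons.prems(1) by force
    then have "perm_of_word ((y # ys) @ [x]) =
        s_gen y \<circ> s_gen (y + 1) \<circ> s_gen y \<circ> perm_of_word ys'"
      using 2 ys by (simp add: perm_of_word_comp_s_gen_commute comp_assoc)
    also have "\<dots> = s_gen (y + 1) \<circ> s_gen y \<circ> s_gen (y + 1) \<circ> perm_of_word ys'"
      by (simp only: s_gen_braid)
    finally show ?thesis using 2 ys Cons.prems(3) by (simp add: comp_assoc)
  next
    case 3
    then have bumped: "snd (row_insert x ys) = Some z" using Cons.prems(3) by simp
    have "sorted_wrt (<) ys" using Cons.prems(1) by simp
    moreover have "reduced_word (ys @ [x])"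
      using Cons.prems(2) reduced_word_appendD2[of "[y]"] by simp
    ultimately have IH:
        "perm_of_word (ys @ [x]) = s_gen z \<circ> perm_of_word (fst (row_insert x ys))"
      using Cons.IH bumped by (simp only: perm_of_word_Cons)
    have commute: "s_gen y \<circ> s_gen z = s_gen z \<circ> s_gen y"
      using 3 row_insert_Some_less[OF bumped] by (simp add: s_gen_commute)
    have "perm_of_word ((y # ys) @ [x]) =
        s_gen y \<circ> (s_gen z \<circ> perm_of_word (fst (row_insert x ys)))"
      by (simp only: append_Cons perm_of_word_Cons IH)
    also have "\<dots> = s_gen z \<circ> (s_gen y \<circ> perm_of_word (fst (row_insert x ys)))"
      by (simp only: comp_assoc[symmetric] commute)
    finally show ?thesis using 3 by simp
  qed
qed simp

definition shift01 :: "int \<Rightarrow> int \<Rightarrow> bool" where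
  "shift01 a b \<longleftrightarrow> a \<le> b \<and> b \<le> a + 1"

lemma row_insert_shift01:
  assumes "sorted_wrt (<) r" "sorted_wrt (<) rt" "list_all2 shift01 r rt" "shift01 x xt"
    "reduced_word (r @ [x])" "reduced_word (rt @ [xt])"
  shows "rel_prod (list_all2 shift01) (rel_option shift01) (row_insert x r) (row_insert xt rt)"
  using assms
proof (induction r arbitrary: rt)
  case (Cons y ys)
  from Cons.prems(3) obtain yt yts where rt: "rt = yt # yts"
    and shift_y: "shift01 y yt" and shift_ys: "list_all2 shift01 ys yts"
    by (cases rt) auto
  have sorted: "sorted_wrt (<) ys" "sorted_wrt (<) yts" using Cons.prems(1,2) rt by auto
  consider "x \<le> y" "xt \<le> yt" | "x \<le> y" "yt < xt" | "y < x" "xt \<le> yt" | "y < x" "yt < xt"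
    by linarith
  then show ?case
  proof cases
    case 1
    then show ?thesis using shift_y shift_ys Cons.prems(4) rt
      by (auto simp: rel_prod_sel) (auto simp: shift01_def)
  next
    case 2
    then have eq: "x = y" "yt = y" "xt = y + 1"
      using shift_y Cons.prems(4) by (auto simp: shift01_def)
    then obtain ys' where ys: "ys = (y + 1) # ys'"
      using reduced_row_snoc_head Cons.prems(1,5) by fastforce
    with shift_ys obtain yt1 yts' where
      "yts = yt1 # yts'" "shift01 (y + 1) yt1" "list_all2 shift01 ys' yts'"
      by (cases yts) auto
    with eq ys rt show ?thesis by (auto simp: rel_prod_sel) (auto simp: shift01_def)
  next
    case 3
    then have eq: "x = y + 1" "yt = y + 1" "xt = y + 1"
      using shift_y Cons.prems(4) by (auto simp: shift01_def)
    then obtain yts' where yts: "yts = (yt + 1) # yts'"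
      using reduced_row_snoc_head Cons.prems(2,6) rt by fastforce
    with shift_ys obtain y1 ys' where
      ys: "ys = y1 # ys'" and "shift01 y1 (yt + 1)" "list_all2 shift01 ys' yts'"
      by (cases ys) auto
    moreover have "y < y1" using Cons.prems(1) ys by simp
    ultimately show ?thesis using eq yts rt by (auto simp: rel_prod_sel) (auto simp: shift01_def)
  next
    case 4
    have "reduced_word (ys @ [x])" "reduced_word (yts @ [xt])"
      using Cons.prems(5,6) reduced_word_appendD2[of "[_]"] rt by auto
    then have "rel_prod (list_all2 shift01) (rel_option shift01)
        (row_insert x ys) (row_insert xt yts)"
      using Cons.IH sorted shift_ys Cons.prems(4) by blast
    then show ?thesis using 4 rt shift_y by (simp add: rel_prod_sel)
  qed
qed simp

definition reading_word :: "int list list \<Rightarrow> int list" where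
  "reading_word P = concat (rev P)"

lemma reading_word_Nil [simp]: "reading_word [] = []"
  and reading_word_Cons [simp]: "reading_word (r # P) = reading_word P @ r"
  by (simp_all add: reading_word_def)

lemma sorted_rows_eg_insert:
  "list_all (sorted_wrt (<)) P \<Longrightarrow> list_all (sorted_wrt (<)) (fst (eg_insert x P))"
proof (induction P arbitrary: x)
  case (Cons r P)
  then show ?case
    by (cases "snd (row_insert x r)") (simp_all add: eg_insert_Cons sorted_row_insert)
qed simp

lemma length_reading_word_eg_insert:
  "list_all (sorted_wrt (<)) P \<Longrightarrow>
    length (reading_word (fst (eg_insert x P))) = Suc (length (reading_word P))"
proof (induction P arbitrary: x)
  case (Cons r P)
  then show ?case
    by (cases "snd (row_insert x r)")
      (simp_all add: eg_insert_Cons row_insert_None length_row_insert_Some)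
qed simp

lemma reduced_word_bumped:
  assumes "reduced_word (w @ r @ [x])" "sorted_wrt (<) r" "snd (row_insert x r) = Some z"
  shows "reduced_word (w @ [z])"
proof -
  have "perm_of_word (r @ [x]) = perm_of_word (z # fst (row_insert x r))"
    using perm_of_word_row_insert assms reduced_word_appendD2 by blast
  then have "reduced_word ((w @ [z]) @ fst (row_insert x r))"
    using length_row_insert_Some[OF assms(3)]
    by (intro reduced_word_perm_eq[OF assms(1)]) simp_all
  then show ?thesis by (rule reduced_word_appendD1)
qed

lemma perm_of_word_reading_word_eg_insert:
  "list_all (sorted_wrt (<)) P \<Longrightarrow> reduced_word (reading_word P @ [x]) \<Longrightarrow>
    perm_of_word (reading_word (fst (eg_insert x P))) = perm_of_word (reading_word P @ [x])"
proof (induction P arbitrary: x)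
  case (Cons r P)
  show ?case
  proof (cases "snd (row_insert x r)")
    case None
    then show ?thesis using Cons.prems by (simp add: eg_insert_Cons row_insert_None)
  next
    case (Some z)
    have sorted: "sorted_wrt (<) r" "list_all (sorted_wrt (<)) P"
      using Cons.prems(1) by simp_all
    have reduced: "reduced_word (reading_word P @ r @ [x])" using Cons.prems(2) by simp
    have IH: "perm_of_word (reading_word (fst (eg_insert z P))) =
        perm_of_word (reading_word P @ [z])"
      using Cons.IH sorted(2) reduced_word_bumped[OF reduced sorted(1) Some] by blast
    have row: "s_gen z \<circ> perm_of_word (fst (row_insert x r)) = perm_of_word r \<circ> s_gen x"
      using perm_of_word_row_insert[OF sorted(1) _ Some] reduced_word_appendD2[OF reduced]
      by (simp only: perm_of_word_append perm_of_word_Cons perm_of_word_Nil comp_id)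
    have "perm_of_word (reading_word (fst (eg_insert x (r # P)))) =
        perm_of_word (reading_word (fst (eg_insert z P))) \<circ> perm_of_word (fst (row_insert x r))"
      using Some by (simp add: eg_insert_Cons[OF sorted(1)])
    also have "\<dots> = perm_of_word (reading_word P) \<circ> perm_of_word (r @ [x])"
      by (simp only: IH perm_of_word_append perm_of_word_Cons perm_of_word_Nil comp_id
          comp_assoc row)
    finally show ?thesis by (simp only: reading_word_Cons append_assoc perm_of_word_append)
  qed
qed simp

lemma reduced_word_reading_word_eg_insert:
  assumes "list_all (sorted_wrt (<)) P" "reduced_word (reading_word P @ x # u)"
  shows "reduced_word (reading_word (fst (eg_insert x P)) @ u)"
proof (rule reduced_word_perm_eq[OF assms(2)])
  have "reduced_word (reading_word P @ [x])"
    using assms(2) reduced_word_appendD1[of "reading_word P @ [x]"] by simp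
  then show "perm_of_word (reading_word (fst (eg_insert x P)) @ u) =
      perm_of_word (reading_word P @ x # u)"
    using perm_of_word_reading_word_eg_insert[OF assms(1)] by (simp add: comp_assoc)
  show "length (reading_word (fst (eg_insert x P)) @ u) = length (reading_word P @ x # u)"
    using length_reading_word_eg_insert[OF assms(1)] by simp
qed

lemma eg_insert_shift01:
  assumes "list_all (sorted_wrt (<)) P" "list_all (sorted_wrt (<)) Pt"
    "list_all2 (list_all2 shift01) P Pt" "shift01 x xt"
    "reduced_word (reading_word P @ [x])" "reduced_word (reading_word Pt @ [xt])"
  shows "rel_prod (list_all2 (list_all2 shift01)) (=) (eg_insert x P) (eg_insert xt Pt)"
  using assms
proof (induction P arbitrary: Pt x xt)
  case Nil
  then show ?case by simp
next
  case (Cons r P)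
  from Cons.prems(3) obtain rt Pt' where Pt: "Pt = rt # Pt'"
    and shift_r: "list_all2 shift01 r rt" and shift_P: "list_all2 (list_all2 shift01) P Pt'"
    by (cases Pt) auto
  have sorted: "sorted_wrt (<) r" "sorted_wrt (<) rt"
    "list_all (sorted_wrt (<)) P" "list_all (sorted_wrt (<)) Pt'"
    using Cons.prems(1,2) Pt by simp_all
  have reduced:
    "reduced_word (reading_word P @ r @ [x])" "reduced_word (reading_word Pt' @ rt @ [xt])"
    using Cons.prems(5,6) Pt by simp_all
  have rows: "rel_prod (list_all2 shift01) (rel_option shift01) (row_insert x r) (row_insert xt rt)"
    using row_insert_shift01[OF sorted(1,2) shift_r Cons.prems(4)] reduced reduced_word_appendD2
    by blast
  show ?case
  proof (cases "snd (row_insert x r)")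
    case None
    then have "snd (row_insert xt rt) = None" using rows by (simp add: rel_prod_sel)
    then show ?thesis
      using None rows shift_P Pt by (simp add: eg_insert_Cons sorted(1,2) rel_prod_sel)
  next
    case (Some z)
    then obtain zt where Some_t: "snd (row_insert xt rt) = Some zt" and "shift01 z zt"
      using rows by (auto simp: rel_prod_sel option_rel_Some1)
    then have "rel_prod (list_all2 (list_all2 shift01)) (=) (eg_insert z P) (eg_insert zt Pt')"
      using Cons.IH sorted(3,4) shift_P reduced_word_bumped[OF reduced(1) sorted(1) Some]
        reduced_word_bumped[OF reduced(2) sorted(2) Some_t] by blast
    then show ?thesis
      using Some Some_t rows Pt by (simp add: eg_insert_Cons sorted(1,2) rel_prod_sel)
  qed
qed

lemma eg_step_eq:
  "eg_step (P, Q) (i, x) = (fst (eg_insert x P), add_box (snd (eg_insert x P)) i Q)"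
  by (simp add: eg_step_def split: prod.split)

lemma recording_foldl_eg_step_shift01:
  assumes "list_all2 shift01 u ut"
    "list_all (sorted_wrt (<)) P" "list_all (sorted_wrt (<)) Pt"
    "list_all2 (list_all2 shift01) P Pt"
    "reduced_word (reading_word P @ u)" "reduced_word (reading_word Pt @ ut)"
  shows "snd (foldl eg_step (P, Q) (zip js u)) = snd (foldl eg_step (Pt, Q) (zip js ut))"
  using assms
proof (induction u arbitrary: ut js P Pt Q)
  case (Cons x u)
  from Cons.prems(1) obtain xt ut' where ut: "ut = xt # ut'"
    and "shift01 x xt" and shift_u: "list_all2 shift01 u ut'"
    by (cases ut) auto
  show ?case
  proof (cases js)
    case js: (Cons i js')
    have "reduced_word (reading_word P @ [x])" "reduced_word (reading_word Pt @ [xt])"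
      using Cons.prems(5,6) reduced_word_appendD1[of "_ @ [_]"] ut by auto
    then have "rel_prod (list_all2 (list_all2 shift01)) (=) (eg_insert x P) (eg_insert xt Pt)"
      using eg_insert_shift01 Cons.prems(2-4) \<open>shift01 x xt\<close> by blast
    moreover have "list_all (sorted_wrt (<)) (fst (eg_insert x P))"
      "list_all (sorted_wrt (<)) (fst (eg_insert xt Pt))"
      using Cons.prems(2,3) sorted_rows_eg_insert by blast+
    moreover have "reduced_word (reading_word (fst (eg_insert x P)) @ u)"
      "reduced_word (reading_word (fst (eg_insert xt Pt)) @ ut')"
      using Cons.prems(2,3,5,6) ut reduced_word_reading_word_eg_insert by blast+
    ultimately show ?thesis
      using Cons.IH[OF shift_u] js ut by (simp add: eg_step_eq rel_prod_sel)
  qed simp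
qed simp

theorem proposition5p15:
  fixes w wt :: "int list"
  assumes "reduced_word w" and "reduced_word wt"
    and "length wt = length w"
    and "\<forall>i < length w. wt ! i - w ! i \<in> {0, 1}"
  shows "Q_EG w = Q_EG wt"
proof -
  have "list_all2 shift01 w wt"
    using assms(3,4) by (auto simp: list_all2_conv_all_nth shift01_def)
  then have "snd (foldl eg_step ([], []) (zip [1..<length w + 1] w)) =
      snd (foldl eg_step ([], []) (zip [1..<length w + 1] wt))"
    using assms(1,2) by (intro recording_foldl_eg_step_shift01) simp_all
  then show ?thesis using assms(3) by (simp add: Q_EG_def EG_def)
qed

end
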